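(* Let $a>0$, $b>0$, $G_\beta(x,y)=\left(y,-x+\frac{y}{\beta+y^2}\right)$ for $\beta>0$, and $G_{b,a}=G_b\circ G_a$. Then $G_{b,a}$ has points of (minimal) period $2$ if and only if $0<ab<1/16$. Moreover, in that case the set of points of period $2$ is the level set $\{V_{b,a}(x,y)=-ab\}$, which consists of two ovals, where $V_{b,a}(x,y)=ax^2+by^2-xy+x^2y^2$. *)

theory Defs
  imports "HOL-Analysis.Analysis"
begin

definition G :: "real \<Rightarrow> real \<times> real \<Rightarrow> real \<times> real" where
  "G \<beta> p = (snd p, - fst p + snd p / (\<beta> + (snd p)\<^sup>2))"

definition Gba :: "real \<Rightarrow> real \<Rightarrow> real \<times> real \<Rightarrow> real \<times> real" where
  "Gba b a = G b \<circ> G a"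

definition V :: "real \<Rightarrow> real \<Rightarrow> real \<times> real \<Rightarrow> real" where
  "V b a p = a * (fst p)\<^sup>2 + b * (snd p)\<^sup>2 - fst p * snd p + (fst p)\<^sup>2 * (snd p)\<^sup>2"

definition period2 :: "('a \<Rightarrow> 'a) \<Rightarrow> 'a \<Rightarrow> bool" where
  "period2 F p \<longleftrightarrow> F (F p) = p \<and> F p \<noteq> p"

definition oval :: "(real \<times> real) set \<Rightarrow> bool" where
  "oval C \<longleftrightarrow> C homeomorphic sphere (0::real \<times> real) 1"

definition two_ovals :: "(real \<times> real) set \<Rightarrow> bool" where
  "two_ovals S \<longleftrightarrow> (\<exists>C1 C2. oval C1 \<and> oval C2 \<and> C1 \<inter> C2 = {} \<and> S = C1 \<union> C2)"

end

theory Submission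
  imports Defs
begin

text \<open>
  The level set V(x, y) = -ab is the curve (x^2 + b) (y^2 + a) = x y. On it the map G_{b,a}
  acts as the involution (x, y) \<mapsto> (b/x, a/y); conversely, since u \<mapsto> u / (c + u^2) takes
  the same value exactly at u and c/u, every point of period two lies on this curve. AM-GM
  applied to both factors shows that the curve is empty for ab > 1/16 and consists of fixed
  points for ab = 1/16. For ab < 1/16 the logarithmic coordinates x = sqrt b e^t,
  y = sqrt a e^s turn the branch x > 0 into the level set cosh t cosh s = 1 / (4 sqrt (ab)) of
  a convex coercive function. Such a level set is the boundary of a compact convex set with
  nonempty interior, hence a circle; the branch x < 0 is its mirror image.
\<close>

section \<open>Points of period two and the level set\<close>

lemma div_add_sq_eq_iff:
  fixes c u v :: real
  assumes "c > 0"
  shows "u / (c + u\<^sup>2) = v / (c + v\<^sup>2) \<longleftrightarrow> u = v \<or> u * v = c"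
proof -
  have "c + u\<^sup>2 > 0" "c + v\<^sup>2 > 0" using assms by (auto intro: add_pos_nonneg)
  then have "u / (c + u\<^sup>2) = v / (c + v\<^sup>2) \<longleftrightarrow> (u - v) * (c - u * v) = 0"
    by (simp add: frac_eq_eq algebra_simps power2_eq_square)
  then show ?thesis by auto
qed

lemma V_swap: "V a b (y, x) = V b a (x, y)"
  by (simp add: V_def algebra_simps)

lemma V_uminus: "V b a (- p) = V b a p"
  by (simp add: V_def)

lemma V_eq_neg_ab_iff_product:
  "V b a (x, y) = - (a * b) \<longleftrightarrow> (x\<^sup>2 + b) * (y\<^sup>2 + a) = x * y"
  by (auto simp: V_def algebra_simps)

lemma V_level_mult_pos:
  fixes a b x y :: real
  assumes "a > 0" "b > 0" "V b a (x, y) = - (a * b)"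
  shows "x * y > 0"
proof -
  have "x\<^sup>2 + b > 0" "y\<^sup>2 + a > 0"
    using assms by (simp_all add: add_nonneg_pos)
  then have "(x\<^sup>2 + b) * (y\<^sup>2 + a) > 0"
    by (rule mult_pos_pos)
  then show ?thesis
    using assms(3) by (simp add: V_eq_neg_ab_iff_product)
qed

lemma V_level_nonzero:
  fixes a b x y :: real
  assumes "a > 0" "b > 0" "V b a (x, y) = - (a * b)"
  shows "x \<noteq> 0" "y \<noteq> 0"
  using V_level_mult_pos[OF assms] by auto

lemma V_eq_neg_ab_iff:
  fixes a b x y :: real
  assumes "a > 0" "b > 0"
  shows "V b a (x, y) = - (a * b) \<longleftrightarrow> x \<noteq> 0 \<and> y / (a + y\<^sup>2) = x + b / x"
proof (cases "x = 0")
  case False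
  have "a + y\<^sup>2 > 0"
    using assms by (simp add: add_pos_nonneg)
  with False show ?thesis
    by (auto simp: V_eq_neg_ab_iff_product field_simps power2_eq_square)
qed (use V_level_nonzero(1)[OF assms, of 0 y] in auto)

lemma G_on_V_level:
  fixes a b x y :: real
  assumes "a > 0" "b > 0" "V b a (x, y) = - (a * b)"
  shows "G a (x, y) = (y, b / x)"
  using assms by (simp add: G_def V_eq_neg_ab_iff add.commute)

lemma Gba_on_V_level:
  fixes a b x y :: real
  assumes a: "a > 0" and b: "b > 0" and L: "V b a (x, y) = - (a * b)"
  shows "Gba b a (x, y) = (b / x, a / y)"
proof -
  have x: "x \<noteq> 0" using V_level_nonzero[OF assms] by simp
  have "V a b (y, x) = - (b * a)" using L by (simp add: V_swap mult.commute)
  then have yx: "x / (b + x\<^sup>2) = y + a / y"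
    using V_eq_neg_ab_iff[OF b a] by (simp add: add.commute)
  have "(b / x) / (b + (b / x)\<^sup>2) = x / (b + x\<^sup>2)"
    by (subst div_add_sq_eq_iff[OF b]) (simp add: x)
  then have "G b (y, b / x) = (b / x, a / y)"
    by (simp add: G_def yx)
  then show ?thesis
    using G_on_V_level[OF assms] by (simp add: Gba_def)
qed

lemma V_level_involution:
  fixes a b x y :: real
  assumes a: "a > 0" and b: "b > 0" and L: "V b a (x, y) = - (a * b)"
  shows "V b a (b / x, a / y) = - (a * b)"
proof -
  have x: "x \<noteq> 0" and y: "y \<noteq> 0" using V_level_nonzero[OF assms] by simp_all
  have bx: "b / x \<noteq> 0" "b / (b / x) = x"
    using b x by simp_all
  have "(a / y) / (a + (a / y)\<^sup>2) = y / (a + y\<^sup>2)"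
    by (subst div_add_sq_eq_iff[OF a]) (simp add: y)
  also have "\<dots> = x + b / x"
    using L V_eq_neg_ab_iff[OF a b] by simp
  also have "\<dots> = b / x + b / (b / x)"
    using bx by simp
  finally show ?thesis
    using V_eq_neg_ab_iff[OF a b] bx(1) by simp
qed

lemma Gba_Gba_on_V_level:
  assumes "a > 0" "b > 0" "V b a p = - (a * b)"
  shows "Gba b a (Gba b a p) = p"
proof -
  obtain x y where p: "p = (x, y)" by (cases p)
  have "x \<noteq> 0" "y \<noteq> 0" using V_level_nonzero assms p by auto
  then show ?thesis
    using assms Gba_on_V_level V_level_involution by (simp add: p)
qed

lemma amgm_product_defect:
  fixes a b p q :: real
  shows "((p + b) * (q + a))\<^sup>2 - 16 * a * b * p * q
      = (p + b)\<^sup>2 * (q - a)\<^sup>2 + 4 * a * q * (p - b)\<^sup>2"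
  by algebra

lemma V_level_ab_bound:
  fixes a b x y :: real
  assumes a: "a > 0" and b: "b > 0" and L: "V b a (x, y) = - (a * b)"
  shows "a * b \<le> 1 / 16" and "a * b = 1 / 16 \<Longrightarrow> x\<^sup>2 = b \<and> y\<^sup>2 = a"
proof -
  have "x \<noteq> 0" "y \<noteq> 0" using V_level_nonzero[OF assms] by simp_all
  then have xy: "x\<^sup>2 * y\<^sup>2 > 0" by simp
  have "((x\<^sup>2 + b) * (y\<^sup>2 + a))\<^sup>2 = x\<^sup>2 * y\<^sup>2"
    using L by (simp add: V_eq_neg_ab_iff_product power_mult_distrib)
  then have D: "x\<^sup>2 * y\<^sup>2 - 16 * a * b * x\<^sup>2 * y\<^sup>2
      = (x\<^sup>2 + b)\<^sup>2 * (y\<^sup>2 - a)\<^sup>2 + 4 * a * y\<^sup>2 * (x\<^sup>2 - b)\<^sup>2"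
    using amgm_product_defect[of "x\<^sup>2" b "y\<^sup>2" a] by simp
  have "0 \<le> (x\<^sup>2 + b)\<^sup>2 * (y\<^sup>2 - a)\<^sup>2 + 4 * a * y\<^sup>2 * (x\<^sup>2 - b)\<^sup>2"
    using a by simp
  then have "16 * a * b * x\<^sup>2 * y\<^sup>2 \<le> x\<^sup>2 * y\<^sup>2"
    using D by linarith
  then have "(16 * a * b) * (x\<^sup>2 * y\<^sup>2) \<le> 1 * (x\<^sup>2 * y\<^sup>2)"
    by (simp add: mult.assoc)
  then show "a * b \<le> 1 / 16"
    using xy by (simp only: mult_le_cancel_right_pos)
  assume "a * b = 1 / 16"
  then have "16 * a * b = 1" by simp
  then have "(x\<^sup>2 + b)\<^sup>2 * (y\<^sup>2 - a)\<^sup>2 + 4 * a * y\<^sup>2 * (x\<^sup>2 - b)\<^sup>2 = 0"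
    using D by simp
  moreover have "0 \<le> (x\<^sup>2 + b)\<^sup>2 * (y\<^sup>2 - a)\<^sup>2" "0 \<le> 4 * a * y\<^sup>2 * (x\<^sup>2 - b)\<^sup>2"
    using a by simp_all
  ultimately have "(x\<^sup>2 + b)\<^sup>2 * (y\<^sup>2 - a)\<^sup>2 = 0" "4 * a * y\<^sup>2 * (x\<^sup>2 - b)\<^sup>2 = 0"
    by linarith+
  moreover have "x\<^sup>2 + b > 0"
    using b by (simp add: add_nonneg_pos)
  ultimately show "x\<^sup>2 = b \<and> y\<^sup>2 = a"
    using a \<open>y \<noteq> 0\<close> by simp
qed

lemma Gba_fixed_on_V_level_iff:
  fixes a b :: real
  assumes a: "a > 0" and b: "b > 0" and L: "V b a p = - (a * b)"
  shows "Gba b a p = p \<longleftrightarrow> a * b = 1 / 16"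
proof -
  obtain x y where p: "p = (x, y)" by (cases p)
  have x: "x \<noteq> 0" and y: "y \<noteq> 0" using V_level_nonzero a b L p by auto
  have "Gba b a p = p \<longleftrightarrow> x\<^sup>2 = b \<and> y\<^sup>2 = a"
    using Gba_on_V_level[OF a b] L x y by (auto simp: p field_simps power2_eq_square)
  also have "\<dots> \<longleftrightarrow> a * b = 1 / 16"
  proof
    assume sq: "x\<^sup>2 = b \<and> y\<^sup>2 = a"
    then have "(2 * b) * (2 * a) = x * y"
      using L by (simp add: p V_eq_neg_ab_iff_product)
    have "16 * (a * b) * (a * b) = ((2 * b) * (2 * a))\<^sup>2"
      by (simp add: power2_eq_square)
    also have "\<dots> = x\<^sup>2 * y\<^sup>2"
      by (simp add: \<open>(2 * b) * (2 * a) = x * y\<close> power_mult_distrib)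
    also have "\<dots> = 1 * (a * b)"
      using sq by (simp add: mult.commute)
    finally have "16 * (a * b) * (a * b) = 1 * (a * b)" .
    then show "a * b = 1 / 16" using a b by simp
  next
    assume "a * b = 1 / 16"
    then show "x\<^sup>2 = b \<and> y\<^sup>2 = a"
      by (rule V_level_ab_bound(2)[OF a b L[unfolded p]])
  qed
  finally show ?thesis .
qed

lemma period2_Gba_imp_V_level:
  fixes a b :: real
  assumes a: "a > 0" and b: "b > 0" and P: "period2 (Gba b a) (x, y)"
  shows "V b a (x, y) = - (a * b)"
proof -
  define z where "z = - x + y / (a + y\<^sup>2)"
  define w where "w = - y + z / (b + z\<^sup>2)"
  have "Gba b a (x, y) = (z, w)"
    by (simp add: Gba_def G_def z_def w_def)
  moreover have "Gba b a (z, w)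
      = (- z + w / (a + w\<^sup>2), - w + (- z + w / (a + w\<^sup>2)) / (b + (- z + w / (a + w\<^sup>2))\<^sup>2))"
    by (simp add: Gba_def G_def)
  ultimately have returns: "- z + w / (a + w\<^sup>2) = x" "- w + x / (b + x\<^sup>2) = y"
    and moved: "(z, w) \<noteq> (x, y)"
    using P by (auto simp: period2_def)
  have "y / (a + y\<^sup>2) = w / (a + w\<^sup>2)"
    using returns(1) by (simp add: z_def)
  then have wy: "y = w \<or> y * w = a"
    by (simp add: div_add_sq_eq_iff[OF a])
  have "x / (b + x\<^sup>2) = z / (b + z\<^sup>2)"
    using returns(2) by (simp add: w_def)
  then have xz: "x = z \<or> x * z = b"
    by (simp add: div_add_sq_eq_iff[OF b])
  show ?thesis
  proof (cases "x * z = b")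
    case True
    then have "x \<noteq> 0" "z = b / x"
      using b by (auto simp: field_simps)
    then show ?thesis
      by (simp add: V_eq_neg_ab_iff[OF a b] z_def)
  next
    case False
    with xz moved wy have "y * w = a" by auto
    then have "y \<noteq> 0" "w = a / y"
      using a by (auto simp: field_simps)
    then have "V a b (y, x) = - (b * a)"
      using returns(2) by (simp add: V_eq_neg_ab_iff[OF b a] add.commute)
    then show ?thesis
      by (simp add: V_swap mult.commute)
  qed
qed

lemma period2_Gba_iff:
  fixes a b :: real
  assumes a: "a > 0" and b: "b > 0"
  shows "period2 (Gba b a) p \<longleftrightarrow> V b a p = - (a * b) \<and> a * b \<noteq> 1 / 16"
proof
  assume P: "period2 (Gba b a) p"
  then have "V b a p = - (a * b)"
    using period2_Gba_imp_V_level[OF a b, of "fst p" "snd p"] by simp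
  with P show "V b a p = - (a * b) \<and> a * b \<noteq> 1 / 16"
    using Gba_fixed_on_V_level_iff[OF a b] by (simp add: period2_def)
next
  assume "V b a p = - (a * b) \<and> a * b \<noteq> 1 / 16"
  then show "period2 (Gba b a) p"
    using Gba_Gba_on_V_level[OF a b] Gba_fixed_on_V_level_iff[OF a b] by (simp add: period2_def)
qed

section \<open>Level sets of convex functions are spheres\<close>

lemma convex_on_compose_linear:
  assumes f: "convex_on UNIV f" and l: "linear l"
  shows "convex_on UNIV (\<lambda>x. f (l x))"
proof (rule convex_onI)
  fix t :: real and x y
  assume "0 < t" "t < 1"
  then show "f (l ((1 - t) *\<^sub>R x + t *\<^sub>R y)) \<le> (1 - t) * f (l x) + t * f (l y)"
    using convex_onD[OF f, of t "l x" "l y"] by (simp add: linear_add[OF l] linear_scale[OF l])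
qed simp

lemma convex_on_sublevel_convex:
  assumes "convex_on UNIV f"
  shows "convex {x. f x \<le> k}"
proof (rule convexI)
  fix x y and u v :: real
  assume "x \<in> {x. f x \<le> k}" "y \<in> {x. f x \<le> k}" "0 \<le> u" "0 \<le> v" "u + v = 1"
  then show "u *\<^sub>R x + v *\<^sub>R y \<in> {x. f x \<le> k}"
    using convex_lower[OF assms, of x y u v] by simp
qed

lemma convex_on_level_notin_interior_sublevel:
  fixes f :: "'a::real_normed_vector \<Rightarrow> real"
  assumes f: "convex_on UNIV f" and z: "f z < f x"
  shows "x \<notin> interior {y. f y \<le> f x}"
proof
  assume "x \<in> interior {y. f y \<le> f x}"
  then obtain e where e: "e > 0" "ball x e \<subseteq> {y. f y \<le> f x}"
    by (auto simp: mem_interior)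
  have "x \<noteq> z" using z by auto
  then have n: "norm (x - z) > 0" by simp
  \<comment> \<open>q lies beyond x on the ray from z, so x is a proper convex combination of z and q\<close>
  define d where "d = e / (2 * norm (x - z))"
  have d: "d > 0" using e n by (simp add: d_def)
  define q where "q = x + d *\<^sub>R (x - z)"
  have "dist x q = e / 2"
    using n d e by (simp add: q_def d_def dist_norm)
  then have "q \<in> ball x e" using e by simp
  then have fq: "f q \<le> f x" using e by blast
  define u where "u = 1 / (1 + d)"
  have u: "0 < u" "u < 1" using d by (auto simp: u_def)
  have "x = u *\<^sub>R ((1 + d) *\<^sub>R x)"
    using d by (simp add: u_def)
  also have "\<dots> = u *\<^sub>R q + (u * d) *\<^sub>R z"
    by (simp add: q_def algebra_simps)
  also have "u * d = 1 - u"
    using d by (simp add: u_def field_simps)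
  finally have "x = (1 - u) *\<^sub>R z + u *\<^sub>R q"
    by (simp add: add.commute)
  then have "f x \<le> (1 - u) * f z + u * f q"
    using convex_onD[OF f, of u z q] u by simp
  also have "\<dots> < (1 - u) * f x + u * f x"
    using z fq u by (intro add_less_le_mono mult_strict_left_mono mult_left_mono) auto
  finally show False by (simp add: algebra_simps)
qed

lemma convex_level_set_homeomorphic_sphere:
  fixes f :: "'a::euclidean_space \<Rightarrow> real"
  assumes f: "convex_on UNIV f" and bdd: "bounded {x. f x \<le> k}" and z: "f z < k"
  shows "{x. f x = k} homeomorphic sphere (0::'a) 1"
proof -
  let ?K = "{x. f x \<le> k}"
  have cont: "continuous_on UNIV f"
    by (rule convex_on_continuous[OF open_UNIV f])
  have "closed ?K"
    by (rule closed_Collect_le[OF cont continuous_on_const])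
  have sub: "{x. f x < k} \<subseteq> interior ?K"
    by (rule interior_maximal) (auto intro: open_Collect_less[OF cont continuous_on_const])
  then have ne: "interior ?K \<noteq> {}"
    using z by blast
  have "frontier ?K = {x. f x = k}"
  proof
    show "frontier ?K \<subseteq> {x. f x = k}"
      using sub \<open>closed ?K\<close> by (force simp: frontier_def)
    show "{x. f x = k} \<subseteq> frontier ?K"
      using convex_on_level_notin_interior_sublevel[OF f, of z] z \<open>closed ?K\<close>
      by (force simp: frontier_def)
  qed
  moreover have "aff_dim ?K = aff_dim (cball (0::'a) 1)"
  proof -
    have "aff_dim (interior ?K) = int DIM('a)"
      by (rule aff_dim_open) (use ne in auto)
    then show ?thesis
      using aff_dim_subset[OF interior_subset, of ?K] aff_dim_le_DIM[of ?K] aff_dim_cball[of 1 "0::'a"]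
      by simp
  qed
  then have "rel_frontier ?K homeomorphic rel_frontier (cball (0::'a) 1)"
    using convex_on_sublevel_convex[OF f] bdd
    by (intro homeomorphic_rel_frontiers_convex_bounded_sets) auto
  ultimately show ?thesis
    using rel_frontier_nonempty_interior[OF ne] by simp
qed

section \<open>The level set consists of two ovals\<close>

lemma convex_on_cosh: "convex_on UNIV (cosh :: real \<Rightarrow> real)"
proof -
  have "convex_on UNIV (\<lambda>x::real. exp x / 2 + exp (- x) / 2)"
    using convex_on_compose_linear[OF exp_convex linear_uminus]
    by (intro convex_on_add convex_on_cdiv exp_convex) simp_all
  moreover have "cosh = (\<lambda>x::real. exp x / 2 + exp (- x) / 2)"
    by (simp add: fun_eq_iff cosh_field_def add_divide_distrib)
  ultimately show ?thesis by simp
qed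

lemma convex_on_cosh_mult_cosh:
  "convex_on UNIV (\<lambda>p :: real \<times> real. cosh (fst p) * cosh (snd p))"
proof -
  have "linear (\<lambda>p :: real \<times> real. fst p + snd p)" "linear (\<lambda>p :: real \<times> real. fst p - snd p)"
    by (auto intro: linear_compose_add linear_compose_sub linear_fst linear_snd)
  then have "convex_on UNIV (\<lambda>p :: real \<times> real. cosh (fst p + snd p) / 2 + cosh (fst p - snd p) / 2)"
    by (intro convex_on_add convex_on_cdiv convex_on_compose_linear[OF convex_on_cosh]) simp_all
  then show ?thesis
    by (simp add: cosh_add cosh_diff field_simps)
qed

lemma abs_le_two_cosh: "\<bar>x\<bar> \<le> 2 * cosh (x :: real)"
proof -
  have "\<bar>x\<bar> < exp \<bar>x\<bar>"
    using exp_ge_add_one_self[of "\<bar>x\<bar>"] by linarith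
  also have "exp \<bar>x\<bar> \<le> exp x + exp (- x)"
    using exp_gt_zero[of x] exp_gt_zero[of "- x"] by (cases "0 \<le> x") simp_all
  finally show ?thesis
    by (simp add: cosh_field_def)
qed

lemma bounded_cosh_mult_cosh_sublevel:
  "bounded {p :: real \<times> real. cosh (fst p) * cosh (snd p) \<le> k}"
  unfolding bounded_iff
proof (intro exI ballI)
  fix p :: "real \<times> real"
  assume "p \<in> {p. cosh (fst p) * cosh (snd p) \<le> k}"
  then have k: "cosh (fst p) * cosh (snd p) \<le> k" by simp
  have "cosh (fst p) * 1 \<le> cosh (fst p) * cosh (snd p)"
    by (rule mult_left_mono) (simp_all add: cosh_real_ge_1)
  moreover have "1 * cosh (snd p) \<le> cosh (fst p) * cosh (snd p)"
    by (rule mult_right_mono) (simp_all add: cosh_real_ge_1)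
  ultimately have "cosh (fst p) \<le> k" "cosh (snd p) \<le> k"
    using k by linarith+
  then have "\<bar>fst p\<bar> + \<bar>snd p\<bar> \<le> 4 * k"
    using abs_le_two_cosh[of "fst p"] abs_le_two_cosh[of "snd p"] by linarith
  moreover have "norm p \<le> \<bar>fst p\<bar> + \<bar>snd p\<bar>"
    using norm_Pair_le[of "fst p" "snd p"] by simp
  ultimately show "norm p \<le> 4 * k" by linarith
qed

lemma V_exp_coordinates_eq_iff:
  fixes a b t s :: real
  assumes a: "a > 0" and b: "b > 0"
  shows "V b a (sqrt b * exp t, sqrt a * exp s) = - (a * b)
    \<longleftrightarrow> cosh t * cosh s = 1 / (4 * sqrt (a * b))"
proof -
  define r where "r = sqrt (a * b)"
  have r: "r > 0" "r\<^sup>2 = a * b" "sqrt a * sqrt b = r"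
    using a b by (simp_all add: r_def real_sqrt_mult power_mult_distrib)
  have x: "(sqrt b * exp t)\<^sup>2 + b = 2 * b * exp t * cosh t"
    using b by (simp add: cosh_field_def exp_minus power2_eq_square field_simps)
  have y: "(sqrt a * exp s)\<^sup>2 + a = 2 * a * exp s * cosh s"
    using a by (simp add: cosh_field_def exp_minus power2_eq_square field_simps)
  have "V b a (sqrt b * exp t, sqrt a * exp s) = - (a * b)
      \<longleftrightarrow> ((sqrt b * exp t)\<^sup>2 + b) * ((sqrt a * exp s)\<^sup>2 + a) = sqrt b * exp t * (sqrt a * exp s)"
    by (rule V_eq_neg_ab_iff_product)
  also have "\<dots> \<longleftrightarrow> exp t * exp s * (4 * r\<^sup>2 * (cosh t * cosh s)) = exp t * exp s * r"
    unfolding x y r(2) r(3)[symmetric] using a b by (simp add: algebra_simps)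
  also have "\<dots> \<longleftrightarrow> r * (4 * r * (cosh t * cosh s) - 1) = 0"
    by (simp add: power2_eq_square algebra_simps)
  also have "\<dots> \<longleftrightarrow> cosh t * cosh s = 1 / (4 * r)"
    using r(1) by (auto simp: field_simps)
  finally show ?thesis
    by (simp add: r_def)
qed

lemma cosh_level_homeomorphic_V_positive_branch:
  fixes a b :: real
  assumes a: "a > 0" and b: "b > 0"
  shows "{p :: real \<times> real. cosh (fst p) * cosh (snd p) = 1 / (4 * sqrt (a * b))}
    homeomorphic {p. V b a p = - (a * b) \<and> fst p > 0}"
  (is "?L homeomorphic ?C")
proof -
  let ?exp = "\<lambda>p. (sqrt b * exp (fst p), sqrt a * exp (snd p))"
  let ?ln = "\<lambda>p. (ln (fst p / sqrt b), ln (snd p / sqrt a))"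
  have C_pos: "fst p > 0 \<and> snd p > 0" if "p \<in> ?C" for p
  proof -
    have "fst p > 0" "fst p * snd p > 0"
      using that V_level_mult_pos[OF a b, of "fst p" "snd p"] by simp_all
    then show ?thesis
      by (simp add: zero_less_mult_iff)
  qed
  show ?thesis
    unfolding homeomorphic_minimal
  proof (intro exI conjI ballI)
    fix p assume "p \<in> ?L"
    then show "?exp p \<in> ?C" "?ln (?exp p) = p"
      using V_exp_coordinates_eq_iff[OF a b, of "fst p" "snd p"] a b by simp_all
  next
    fix p assume p: "p \<in> ?C"
    have "fst p > 0" "snd p > 0"
      using C_pos[OF p] by simp_all
    then show "?exp (?ln p) = p"
      using a b by simp
    then show "?ln p \<in> ?L"
      using p V_exp_coordinates_eq_iff[OF a b, of "ln (fst p / sqrt b)" "ln (snd p / sqrt a)"]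
      by simp
  next
    show "continuous_on ?L ?exp"
      by (intro continuous_intros)
    have "continuous_on {p. fst p > 0 \<and> snd p > 0} ?ln"
      using a b by (auto intro!: continuous_intros)
    then show "continuous_on ?C ?ln"
      by (rule continuous_on_subset) (use C_pos in blast)
  qed
qed

lemma V_positive_branch_homeomorphic_sphere:
  fixes a b :: real
  assumes a: "a > 0" and b: "b > 0" and ab: "a * b < 1 / 16"
  shows "{p. V b a p = - (a * b) \<and> fst p > 0} homeomorphic sphere (0::real \<times> real) 1"
proof -
  have "sqrt (a * b) < 1 / 4"
    using ab real_sqrt_less_iff[of "a * b" "1 / 16"] by (simp add: real_sqrt_divide)
  then have "cosh 0 * cosh 0 < 1 / (4 * sqrt (a * b))"
    using a b by (simp add: field_simps)
  then have "{p :: real \<times> real. cosh (fst p) * cosh (snd p) = 1 / (4 * sqrt (a * b))}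
      homeomorphic sphere (0::real \<times> real) 1"
    by (intro convex_level_set_homeomorphic_sphere[where z = 0]
        convex_on_cosh_mult_cosh bounded_cosh_mult_cosh_sublevel) simp
  with cosh_level_homeomorphic_V_positive_branch[OF a b] show ?thesis
    by (rule homeomorphic_trans[OF homeomorphic_sym[THEN iffD1]])
qed

lemma V_negative_branch_eq:
  "{p. V b a p = - (a * b) \<and> fst p < 0} = uminus ` {p. V b a p = - (a * b) \<and> fst p > 0}"
proof (rule set_eqI, rule iffI)
  fix p :: "real \<times> real"
  assume "p \<in> {p. V b a p = - (a * b) \<and> fst p < 0}"
  then have "- p \<in> {p. V b a p = - (a * b) \<and> fst p > 0}"
    by (simp add: V_uminus)
  then show "p \<in> uminus ` {p. V b a p = - (a * b) \<and> fst p > 0}"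
    by (rule rev_image_eqI) simp
qed (auto simp: V_def)

lemma V_level_eq_branches:
  fixes a b :: real
  assumes a: "a > 0" and b: "b > 0"
  shows "{p. V b a p = - (a * b)}
    = {p. V b a p = - (a * b) \<and> fst p > 0} \<union> {p. V b a p = - (a * b) \<and> fst p < 0}"
proof -
  have "fst p \<noteq> 0" if "V b a p = - (a * b)" for p
    using V_level_nonzero(1)[OF a b, of "fst p" "snd p"] that by simp
  then show ?thesis
    unfolding set_eq_iff Un_iff mem_Collect_eq by (metis linorder_neq_iff)
qed

lemma V_level_two_ovals:
  fixes a b :: real
  assumes a: "a > 0" and b: "b > 0" and ab: "a * b < 1 / 16"
  shows "two_ovals {p. V b a p = - (a * b)}"
proof -
  let ?C = "{p. V b a p = - (a * b) \<and> fst p > 0}"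
  have "oval ?C"
    unfolding oval_def by (rule V_positive_branch_homeomorphic_sphere[OF a b ab])
  moreover have "inj (uminus :: real \<times> real \<Rightarrow> real \<times> real)"
    by (simp add: inj_def)
  then have "uminus ` ?C homeomorphic ?C"
    by (rule homeomorphic_sym[THEN iffD1, OF linear_homeomorphic_image[OF linear_uminus]])
  then have "oval (uminus ` ?C)"
    using \<open>oval ?C\<close> unfolding oval_def by (rule homeomorphic_trans)
  moreover have "?C \<inter> uminus ` ?C = {}"
    by (auto simp: V_def)
  ultimately show ?thesis
    unfolding two_ovals_def V_level_eq_branches[OF a b] V_negative_branch_eq by blast
qed

lemma V_level_nonempty:
  fixes a b :: real
  assumes a: "a > 0" and b: "b > 0" and ab: "a * b < 1 / 16"
  shows "\<exists>p. V b a p = - (a * b)"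
proof (rule ccontr)
  assume "\<nexists>p. V b a p = - (a * b)"
  then have empty: "{p. V b a p = - (a * b) \<and> fst p > 0} = {}" by blast
  have "({} :: (real \<times> real) set) homeomorphic sphere (0::real \<times> real) 1"
    using V_positive_branch_homeomorphic_sphere[OF a b ab] by (simp only: empty)
  then have "sphere (0::real \<times> real) 1 = {}" by simp
  moreover have "(1, 0) \<in> sphere (0::real \<times> real) 1" by simp
  ultimately show False by simp
qed

lemma ex_period2_Gba_iff:
  fixes a b :: real
  assumes a: "a > 0" and b: "b > 0"
  shows "(\<exists>p. period2 (Gba b a) p) \<longleftrightarrow> a * b < 1 / 16"
proof
  assume "\<exists>p. period2 (Gba b a) p"
  then obtain p where "V b a p = - (a * b)" "a * b \<noteq> 1 / 16"
    using period2_Gba_iff[OF a b] by blast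
  moreover have "a * b \<le> 1 / 16"
    using V_level_ab_bound(1)[OF a b, of "fst p" "snd p"] calculation(1) by simp
  ultimately show "a * b < 1 / 16" by simp
next
  assume ab: "a * b < 1 / 16"
  then obtain p where "V b a p = - (a * b)"
    using V_level_nonempty[OF a b] by blast
  with ab have "period2 (Gba b a) p"
    using period2_Gba_iff[OF a b] by simp
  then show "\<exists>p. period2 (Gba b a) p" ..
qed

theorem lemma5:
  fixes a b :: real
  assumes "a > 0" and "b > 0"
  shows "((\<exists>p. period2 (Gba b a) p) \<longleftrightarrow> (0 < a * b \<and> a * b < 1/16))
       \<and> (0 < a * b \<and> a * b < 1/16 \<longrightarrow>
           {p. period2 (Gba b a) p} = {p. V b a p = - (a * b)}
         \<and> two_ovals {p. V b a p = - (a * b)})"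
proof -
  have "0 < a * b"
    using assms by simp
  moreover have "{p. period2 (Gba b a) p} = {p. V b a p = - (a * b)}" if "a * b < 1 / 16"
    using period2_Gba_iff[OF assms] that by simp
  ultimately show ?thesis
    using ex_period2_Gba_iff[OF assms] V_level_two_ovals[OF assms] by simp
qed

end
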